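(* Let $(X,T)$ be a dynamical system. The following are equivalent: (1) $(X,T)$ is weakly mixing; (2) there exists a dense $G_\delta$ subset $X'$ of $X$ such that for each $x\in X'$ and all opene $G,U,V\subset X$, the set $n_T(x,G)\cap N_T(U,V)$ is an IP set.
   Context: A dynamical system $(X,T)$: $X$ is a compact metric space with more than one point and without isolated points, $T:X\to X$ a continuous surjection. "Opene" means open and nonempty. $N_T(U,V)=\{n\in\mathbb{Z}_+:U\cap T^{-n}V\neq\varnothing\}$, $n_T(x,G)=\{n\in\mathbb{Z}_+:T^nx\in G\}$. $(X,T)$ is weakly mixing if $(X\times X,T\times T)$ is transitive (i.e. $N_{T\times T}(A,B)\neq\varnothing$ for all opene $A,B\subset X\times X$). A set $\mathcal{S}\subset\mathbb{N}$ is an IP set if there is a sequence $(p_i)_{i\ge1}$ in $\mathbb{N}$ with $\{p_{i_1}+\dots+p_{i_k}:k\in\mathbb{N},\ 1\le i_1<\dots<i_k\}\subset\mathcal{S}$. *)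

theory Defs
  imports "HOL-Analysis.Analysis"
begin

definition dyn_system :: "'a::metric_space set \<Rightarrow> ('a \<Rightarrow> 'a) \<Rightarrow> bool" where
  "dyn_system X T \<longleftrightarrow> compact X \<and> (\<exists>x\<in>X. \<exists>y\<in>X. x \<noteq> y) \<and>
     (\<forall>x\<in>X. x islimpt X) \<and> continuous_on X T \<and> T ` X = X"

definition opene_in :: "'a::topological_space set \<Rightarrow> 'a set \<Rightarrow> bool" where
  "opene_in Y U \<longleftrightarrow> openin (top_of_set Y) U \<and> U \<noteq> {}"

definition hitting_times :: "'a set \<Rightarrow> ('a \<Rightarrow> 'a) \<Rightarrow> 'a set \<Rightarrow> 'a set \<Rightarrow> nat set" where
  "hitting_times X T U V = {n. U \<inter> {x \<in> X. (T ^^ n) x \<in> V} \<noteq> {}}"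

definition visit_times :: "('a \<Rightarrow> 'a) \<Rightarrow> 'a \<Rightarrow> 'a set \<Rightarrow> nat set" where
  "visit_times T x G = {n. (T ^^ n) x \<in> G}"

definition weakly_mixing :: "'a::metric_space set \<Rightarrow> ('a \<Rightarrow> 'a) \<Rightarrow> bool" where
  "weakly_mixing X T \<longleftrightarrow>
     (\<forall>A B. opene_in (X \<times> X) A \<longrightarrow> opene_in (X \<times> X) B \<longrightarrow>
        hitting_times (X \<times> X) (\<lambda>(x, y). (T x, T y)) A B \<noteq> {})"

text \<open>IP set: contains all finite sums p_{i1}+...+p_{ik}, i1<...<ik, of some sequence
of positive integers, i.e. sums over finite nonempty index sets.\<close>
definition IP_set :: "nat set \<Rightarrow> bool" where
  "IP_set S \<longleftrightarrow> (\<exists>p :: nat \<Rightarrow> nat. (\<forall>i. p i \<ge> 1) \<and>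
     (\<forall>I. finite I \<and> I \<noteq> {} \<longrightarrow> sum p I \<in> S))"

end

theory Submission
  imports Defs
begin

text \<open>Weak mixing makes every intersection \<open>N(U\<^sub>1,V\<^sub>1) \<inter> N(U\<^sub>2,V\<^sub>2)\<close> contain some \<open>N(U,V)\<close>, and
every \<open>N(U,V)\<close> contains positive times. Hence, over a countable \<open>\<pi>\<close>-base, the sets of points \<open>x\<close>
with a positive time in \<open>n(x,G) \<inter> N(U,V)\<close> are open and dense, and by Baire their intersection
\<open>X'\<close> is a dense \<open>G\<^sub>\<delta>\<close>. For \<open>x \<in> X'\<close> the generators \<open>p\<^sub>0, p\<^sub>1, \<dots>\<close> of an IP set are chosen
inductively, replacing \<open>G\<close> by \<open>G \<inter> T\<^sup>-\<^sup>p G\<close> and \<open>V\<close> by \<open>V \<inter> T\<^sup>-\<^sup>p V\<close> after each choice \<open>p = p\<^sub>k\<close>, so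
that all finite sums of the \<open>p\<^sub>i\<close> lie in \<open>n(x,G) \<inter> N(U,V)\<close>. Conversely, a point \<open>x \<in> X' \<inter> U\<^sub>1\<close>
and a time \<open>n \<in> n(x,V\<^sub>1) \<inter> N(U\<^sub>2,V\<^sub>2)\<close> show that \<open>T \<times> T\<close> moves \<open>U\<^sub>1 \<times> U\<^sub>2\<close> into \<open>V\<^sub>1 \<times> V\<^sub>2\<close>.\<close>

lemma funpow_image_subset: "T ` X \<subseteq> X \<Longrightarrow> (T ^^ n) ` X \<subseteq> X"
  by (induction n) (auto simp: image_subset_iff)

lemma continuous_on_funpow:
  assumes "continuous_on X T" "T ` X \<subseteq> X"
  shows "continuous_on X (T ^^ n)"
proof (induction n)
  case (Suc n)
  have "continuous_on ((T ^^ n) ` X) T"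
    using assms(1) funpow_image_subset[OF assms(2)] by (rule continuous_on_subset)
  then have "continuous_on X (T \<circ> T ^^ n)"
    using continuous_on_compose[OF Suc] by blast
  then show ?case by simp
qed (simp add: continuous_on_id)

lemma openin_funpow_preimage:
  assumes "continuous_on X T" "T ` X \<subseteq> X" "openin (top_of_set X) W"
  shows "openin (top_of_set X) {x \<in> X. (T ^^ n) x \<in> W}"
proof -
  obtain Q where "open Q" "W = X \<inter> Q" using assms(3) by (auto simp: openin_open)
  moreover from this have "{x \<in> X. (T ^^ n) x \<in> W} = X \<inter> (T ^^ n) -` Q"
    using funpow_image_subset[OF assms(2), of n] by auto
  ultimately show ?thesis
    using continuous_openin_preimage_gen[OF continuous_on_funpow[OF assms(1,2)]] by simp
qed

lemma funpow_map_prod: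
  fixes T :: "'a \<Rightarrow> 'a"
  shows "((\<lambda>(x, y). (T x, T y)) ^^ n) (a, b) = ((T ^^ n) a, (T ^^ n) b)"
  by (induction n) auto

lemma mem_hitting_times: "n \<in> hitting_times X T U V \<longleftrightarrow> (\<exists>u\<in>U. u \<in> X \<and> (T ^^ n) u \<in> V)"
  unfolding hitting_times_def by auto

lemma hitting_times_mono:
  "U \<subseteq> U' \<Longrightarrow> V \<subseteq> V' \<Longrightarrow> hitting_times X T U V \<subseteq> hitting_times X T U' V'"
  unfolding hitting_times_def by blast

lemma opene_in_Int_funpow_preimage:
  assumes "continuous_on X T" "T ` X \<subseteq> X" "opene_in X U" "opene_in X V"
    and "n \<in> hitting_times X T U V"
  shows "opene_in X (U \<inter> {x \<in> X. (T ^^ n) x \<in> V})"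
  using assms openin_funpow_preimage[OF assms(1,2), of V n]
  unfolding opene_in_def hitting_times_def by (auto intro: openin_Int)

lemma exists_disjoint_opene_in:
  fixes X :: "'a::metric_space set"
  assumes "x \<in> X" "y \<in> X" "x \<noteq> y"
  obtains A B where "opene_in X A" "opene_in X B" "A \<inter> B = {}"
proof
  define r where "r = dist x y / 2"
  have "r > 0" using assms by (simp add: r_def)
  then show "opene_in X (X \<inter> ball x r)" "opene_in X (X \<inter> ball y r)"
    using assms by (auto simp: opene_in_def openin_open_Int)
  show "(X \<inter> ball x r) \<inter> (X \<inter> ball y r) = {}"
  proof (rule ccontr)
    assume "(X \<inter> ball x r) \<inter> (X \<inter> ball y r) \<noteq> {}"
    then obtain z where "dist x z < r" "dist y z < r" by auto
    then have "dist x y < 2 * r" using dist_triangle2[of x y z] by linarith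
    then show False by (simp add: r_def)
  qed
qed

lemma opene_in_Times_contains:
  assumes "opene_in (X \<times> Y) A"
  obtains U V where "opene_in X U" "opene_in Y V" "U \<times> V \<subseteq> A"
proof -
  have eq: "top_of_set (X \<times> Y) = prod_topology (top_of_set X) (top_of_set Y)" by simp
  obtain a b where "(a, b) \<in> A" using assms by (auto simp: opene_in_def)
  then obtain U V where "openin (top_of_set X) U" "openin (top_of_set Y) V"
      "a \<in> U" "b \<in> V" "U \<times> V \<subseteq> A"
    using assms unfolding opene_in_def eq openin_prod_topology_alt by blast
  then show thesis using that unfolding opene_in_def by blast
qed

lemma closure_superset_iff_opene_in_meets:
  assumes "S \<subseteq> X"
  shows "X \<subseteq> closure S \<longleftrightarrow> (\<forall>W. opene_in X W \<longrightarrow> W \<inter> S \<noteq> {})"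
proof (intro iffI allI impI subsetI)
  fix W assume X: "X \<subseteq> closure S" and W: "opene_in X W"
  then obtain Q where Q: "open Q" "W = X \<inter> Q" by (auto simp: opene_in_def openin_open)
  with W X have "Q \<inter> closure S \<noteq> {}" by (auto simp: opene_in_def)
  then show "W \<inter> S \<noteq> {}"
    using open_Int_closure_eq_empty[OF Q(1)] Q(2) assms by blast
next
  fix x assume meets: "\<forall>W. opene_in X W \<longrightarrow> W \<inter> S \<noteq> {}" and "x \<in> X"
  show "x \<in> closure S"
  proof (rule ccontr)
    assume "x \<notin> closure S"
    then have "opene_in X (X \<inter> - closure S)"
      using \<open>x \<in> X\<close> by (auto simp: opene_in_def openin_open_Int)
    then show False using meets closure_subset by blast
  qed
qed

lemma compact_countable_pi_base:
  fixes X :: "'a::metric_space set"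
  assumes "compact X"
  obtains \<B> where "countable \<B>" "\<And>B. B \<in> \<B> \<Longrightarrow> opene_in X B"
    "\<And>W. opene_in X W \<Longrightarrow> \<exists>B\<in>\<B>. B \<subseteq> W"
proof -
  have "\<forall>k::nat. \<exists>F. finite F \<and> F \<subseteq> X \<and> X \<subseteq> (\<Union>c\<in>F. ball c (inverse (Suc k)))"
    using seq_compact_imp_totally_bounded[OF compact_imp_seq_compact[OF assms]] by simp
  then obtain F where F: "\<And>k. finite (F k)" "\<And>k. F k \<subseteq> X"
    "\<And>k. X \<subseteq> (\<Union>c\<in>F k. ball c (inverse (Suc k)))" by metis
  define \<B> where "\<B> = (\<Union>k. (\<lambda>c. X \<inter> ball c (inverse (Suc k))) ` F k)"
  have "countable \<B>"
    unfolding \<B>_def by (rule countable_UN) (auto intro!: countable_image countable_finite F(1))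
  moreover have "opene_in X B" if "B \<in> \<B>" for B
    using that F(2) unfolding \<B>_def opene_in_def by (force intro: openin_open_Int)
  moreover have "\<exists>B\<in>\<B>. B \<subseteq> W" if W: "opene_in X W" for W
  proof -
    obtain y Q where y: "y \<in> W" and Q: "open Q" "W = X \<inter> Q"
      using W by (auto simp: opene_in_def openin_open)
    obtain e where e: "e > 0" "ball y e \<subseteq> Q" using Q y by (meson IntD2 open_contains_ball)
    obtain k :: nat where k: "inverse (Suc k) < e / 2"
      using e by (metis reals_Archimedean half_gt_zero)
    obtain c where c: "c \<in> F k" "y \<in> ball c (inverse (Suc k))" using F(3)[of k] y Q by blast
    have "ball c (inverse (Suc k)) \<subseteq> ball y e"
    proof
      fix z assume "z \<in> ball c (inverse (Suc k))"
      then have "dist y z < e"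
        using c(2) k dist_triangle[of y z c] by (simp add: dist_commute)
      then show "z \<in> ball y e" by simp
    qed
    then show ?thesis using c e Q unfolding \<B>_def by blast
  qed
  ultimately show thesis using that by blast
qed

lemma compact_dense_gdelta_Inter:
  fixes X :: "'a::metric_space set"
  assumes "compact X" "countable \<G>"
    and open_dense: "\<And>S. S \<in> \<G> \<Longrightarrow> openin (top_of_set X) S \<and> X \<subseteq> closure S"
  shows "X \<subseteq> closure (X \<inter> \<Inter>\<G>)" "gdelta_in (top_of_set X) (X \<inter> \<Inter>\<G>)"
proof -
  have closure_of_eq: "top_of_set X closure_of S = X \<inter> closure (X \<inter> S)" for S
    by (simp add: closure_of_subtopology)
  have "locally_compact_space (top_of_set X)" "regular_space (top_of_set X)"
    using assms(1) by (simp_all add: compact_imp_locally_compact_space compact_space_subtopology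
        regular_space_subtopology regular_space_euclidean)
  moreover have "top_of_set X closure_of S = topspace (top_of_set X)" if "S \<in> \<G>" for S
  proof -
    have "S \<subseteq> X" "X \<subseteq> closure S" using open_dense[OF that] openin_imp_subset by auto
    then show ?thesis unfolding closure_of_eq by (simp add: Int_absorb1 Int_absorb2)
  qed
  ultimately have "top_of_set X closure_of \<Inter>\<G> = topspace (top_of_set X)"
    using open_dense assms(2) by (intro Baire_category) auto
  then show "X \<subseteq> closure (X \<inter> \<Inter>\<G>)"
    unfolding closure_of_eq by auto
  have "X \<inter> \<Inter>\<G> = \<Inter>(insert X \<G>)" by auto
  moreover have "gdelta_in (top_of_set X) S" if "S \<in> insert X \<G>" for S
    using that open_dense open_imp_gdelta_in
    by (metis insertE openin_topspace topspace_euclidean_subtopology)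
  ultimately show "gdelta_in (top_of_set X) (X \<inter> \<Inter>\<G>)"
    using gdelta_in_Inter[of "insert X \<G>"] assms(2) by auto
qed

lemma weakly_mixing_common_hitting_time:
  assumes "weakly_mixing X T"
    and "opene_in X U\<^sub>1" "opene_in X V\<^sub>1" "opene_in X U\<^sub>2" "opene_in X V\<^sub>2"
  shows "hitting_times X T U\<^sub>1 V\<^sub>1 \<inter> hitting_times X T U\<^sub>2 V\<^sub>2 \<noteq> {}"
proof -
  have "opene_in (X \<times> X) (U\<^sub>1 \<times> U\<^sub>2)" "opene_in (X \<times> X) (V\<^sub>1 \<times> V\<^sub>2)"
    using assms by (auto simp: opene_in_def openin_Times)
  then obtain n where "n \<in> hitting_times (X \<times> X) (\<lambda>(x, y). (T x, T y)) (U\<^sub>1 \<times> U\<^sub>2) (V\<^sub>1 \<times> V\<^sub>2)"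
    using assms(1) unfolding weakly_mixing_def by blast
  then have "n \<in> hitting_times X T U\<^sub>1 V\<^sub>1 \<inter> hitting_times X T U\<^sub>2 V\<^sub>2"
    by (auto simp: hitting_times_def funpow_map_prod)
  then show ?thesis by blast
qed

lemma weakly_mixing_hitting_times_Int:
  assumes "continuous_on X T" "T ` X \<subseteq> X" "weakly_mixing X T"
    and "opene_in X U\<^sub>1" "opene_in X V\<^sub>1" "opene_in X U\<^sub>2" "opene_in X V\<^sub>2"
  obtains U V where "opene_in X U" "opene_in X V"
    "hitting_times X T U V \<subseteq> hitting_times X T U\<^sub>1 V\<^sub>1 \<inter> hitting_times X T U\<^sub>2 V\<^sub>2"
proof -
  obtain m where m: "m \<in> hitting_times X T U\<^sub>1 U\<^sub>2" "m \<in> hitting_times X T V\<^sub>1 V\<^sub>2"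
    using weakly_mixing_common_hitting_time[OF assms(3,4,6,5,7)] by blast
  define U where "U = U\<^sub>1 \<inter> {x \<in> X. (T ^^ m) x \<in> U\<^sub>2}"
  define V where "V = V\<^sub>1 \<inter> {x \<in> X. (T ^^ m) x \<in> V\<^sub>2}"
  have "opene_in X U" "opene_in X V"
    unfolding U_def V_def using opene_in_Int_funpow_preimage assms m by blast+
  moreover have "hitting_times X T U V \<subseteq> hitting_times X T U\<^sub>1 V\<^sub>1 \<inter> hitting_times X T U\<^sub>2 V\<^sub>2"
  proof
    fix n assume "n \<in> hitting_times X T U V"
    then obtain w where w: "w \<in> U" "(T ^^ n) w \<in> V" by (auto simp: mem_hitting_times)
    \<comment> \<open>\<open>T\<^sup>m w\<close> witnesses \<open>n \<in> N(U\<^sub>2,V\<^sub>2)\<close>\<close>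
    have "(T ^^ n) ((T ^^ m) w) = (T ^^ m) ((T ^^ n) w)"
      by (metis funpow_add add.commute comp_apply)
    moreover have "(T ^^ m) w \<in> X" using w funpow_image_subset[OF assms(2)] by (auto simp: U_def)
    ultimately show "n \<in> hitting_times X T U\<^sub>1 V\<^sub>1 \<inter> hitting_times X T U\<^sub>2 V\<^sub>2"
      using w by (auto simp: mem_hitting_times U_def V_def)
  qed
  ultimately show thesis using that by blast
qed

lemma weakly_mixing_positive_common_hitting_time:
  assumes "dyn_system X T" "weakly_mixing X T"
    and "opene_in X U\<^sub>1" "opene_in X V\<^sub>1" "opene_in X U\<^sub>2" "opene_in X V\<^sub>2"
  obtains n where "n \<ge> 1" "n \<in> hitting_times X T U\<^sub>1 V\<^sub>1" "n \<in> hitting_times X T U\<^sub>2 V\<^sub>2"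
proof -
  have "continuous_on X T" "T ` X \<subseteq> X" using assms(1) by (auto simp: dyn_system_def)
  then obtain U V where UV: "opene_in X U" "opene_in X V"
    "hitting_times X T U V \<subseteq> hitting_times X T U\<^sub>1 V\<^sub>1 \<inter> hitting_times X T U\<^sub>2 V\<^sub>2"
    using weakly_mixing_hitting_times_Int[OF _ _ assms(2-6)] by blast
  obtain A B where AB: "opene_in X A" "opene_in X B" "A \<inter> B = {}"
  proof -
    obtain x y where "x \<in> X" "y \<in> X" "x \<noteq> y" using assms(1) by (auto simp: dyn_system_def)
    then show thesis using that exists_disjoint_opene_in by blast
  qed
  obtain n where n: "n \<in> hitting_times X T U V" "n \<in> hitting_times X T A B"
    using weakly_mixing_common_hitting_time[OF assms(2) UV(1,2) AB(1,2)] by blast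
  have "n \<ge> 1" using n(2) AB(3) by (cases n) (auto simp: mem_hitting_times)
  with n(1) UV(3) show thesis using that by blast
qed

definition recurrence_set :: "'a set \<Rightarrow> ('a \<Rightarrow> 'a) \<Rightarrow> 'a set \<Rightarrow> 'a set \<Rightarrow> 'a set \<Rightarrow> 'a set" where
  "recurrence_set X T G U V = {x \<in> X. \<exists>n\<ge>1. n \<in> visit_times T x G \<inter> hitting_times X T U V}"

lemma openin_recurrence_set:
  assumes "continuous_on X T" "T ` X \<subseteq> X" "openin (top_of_set X) G"
  shows "openin (top_of_set X) (recurrence_set X T G U V)"
proof -
  have "recurrence_set X T G U V =
      (\<Union>n \<in> {n. n \<ge> 1 \<and> n \<in> hitting_times X T U V}. {x \<in> X. (T ^^ n) x \<in> G})"
    by (auto simp: recurrence_set_def visit_times_def)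
  then show ?thesis using openin_funpow_preimage[OF assms] by (auto intro!: openin_Union)
qed

lemma dense_recurrence_set:
  assumes "dyn_system X T" "weakly_mixing X T" "opene_in X G" "opene_in X U" "opene_in X V"
  shows "X \<subseteq> closure (recurrence_set X T G U V)"
proof -
  have "recurrence_set X T G U V \<subseteq> X" by (auto simp: recurrence_set_def)
  show ?thesis
    unfolding closure_superset_iff_opene_in_meets[OF \<open>recurrence_set X T G U V \<subseteq> X\<close>]
  proof (intro allI impI)
    fix W assume "opene_in X W"
    then obtain n where n: "n \<ge> 1" "n \<in> hitting_times X T W G" "n \<in> hitting_times X T U V"
      using weakly_mixing_positive_common_hitting_time[OF assms(1,2) _ assms(3-5)] by blast
    then obtain w where "w \<in> W" "w \<in> X" "(T ^^ n) w \<in> G" by (auto simp: mem_hitting_times)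
    then show "W \<inter> recurrence_set X T G U V \<noteq> {}"
      using n by (auto simp: recurrence_set_def visit_times_def)
  qed
qed

lemma funpow_sum_mem_nested:
  assumes nested: "\<And>k. A (Suc k) \<subseteq> A k \<inter> {z. (f ^^ p k) z \<in> A k}"
    and "I \<subseteq> {..<k}" "z \<in> A k"
  shows "(f ^^ sum p I) z \<in> A 0"
  using assms(2,3)
proof (induction k arbitrary: I z)
  case (Suc k)
  then have z: "z \<in> A k" "(f ^^ p k) z \<in> A k" using nested by blast+
  show ?case
  proof (cases "k \<in> I")
    case True
    then have "sum p I = sum p (I - {k}) + p k"
      using Suc.prems(1) finite_subset[of I "{..<Suc k}"] by (simp add: sum.remove)
    moreover have "I - {k} \<subseteq> {..<k}" using Suc.prems(1) by (auto simp: less_Suc_eq)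
    ultimately show ?thesis using Suc.IH z(2) by (simp add: funpow_add)
  next
    case False
    then have "I \<subseteq> {..<k}" using Suc.prems(1) by (auto simp: less_Suc_eq)
    then show ?thesis using Suc.IH z(1) by blast
  qed
qed simp

lemma IP_set_visit_hitting_times:
  assumes cont: "continuous_on X T" and maps: "T ` X \<subseteq> X"
    and return: "\<And>G V. opene_in X G \<Longrightarrow> opene_in X V \<Longrightarrow> \<exists>p\<ge>1.
      p \<in> visit_times T x G \<inter> hitting_times X T G G \<inter> hitting_times X T V V \<inter> hitting_times X T U V"
    and G: "opene_in X G" and V: "opene_in X V"
  shows "IP_set (visit_times T x G \<inter> hitting_times X T U V)"
proof -
  define q where "q G' V' = (SOME p. p \<ge> 1 \<and> p \<in> visit_times T x G' \<inter> hitting_times X T G' G' \<inter>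
      hitting_times X T V' V' \<inter> hitting_times X T U V')" for G' V'
  have q: "q G' V' \<ge> 1 \<and> q G' V' \<in> visit_times T x G' \<inter> hitting_times X T G' G' \<inter>
      hitting_times X T V' V' \<inter> hitting_times X T U V'"
    if "opene_in X G'" "opene_in X V'" for G' V'
    unfolding q_def by (rule someI_ex) (use return[OF that] in blast)
  define shrink where "shrink = (\<lambda>(G', V'). (G' \<inter> {y \<in> X. (T ^^ q G' V') y \<in> G'},
                                               V' \<inter> {y \<in> X. (T ^^ q G' V') y \<in> V'}))"
  define Gs where "Gs k = fst ((shrink ^^ k) (G, V))" for k
  define Vs where "Vs k = snd ((shrink ^^ k) (G, V))" for k
  define p where "p k = q (Gs k) (Vs k)" for k
  have Gs_Suc: "Gs (Suc k) = Gs k \<inter> {y \<in> X. (T ^^ p k) y \<in> Gs k}"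
    and Vs_Suc: "Vs (Suc k) = Vs k \<inter> {y \<in> X. (T ^^ p k) y \<in> Vs k}" for k
    by (simp_all add: Gs_def Vs_def p_def shrink_def case_prod_beta)
  \<comment> \<open>\<open>p k \<in> N(Gs k, Gs k) \<inter> N(Vs k, Vs k)\<close> is what keeps the shrunken sets nonempty\<close>
  have opene: "opene_in X (Gs k) \<and> opene_in X (Vs k)" for k
  proof (induction k)
    case 0
    then show ?case using G V by (simp add: Gs_def Vs_def)
  next
    case (Suc k)
    then show ?case
      using q[of "Gs k" "Vs k"] opene_in_Int_funpow_preimage[OF cont maps]
      unfolding Gs_Suc Vs_Suc p_def by blast
  qed
  have p: "p k \<ge> 1" "(T ^^ p k) x \<in> Gs k" "p k \<in> hitting_times X T U (Vs k)" for k
    using q opene unfolding p_def visit_times_def by blast+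
  have "sum p I \<in> visit_times T x G \<inter> hitting_times X T U V" if I: "finite I" "I \<noteq> {}" for I
  proof -
    define k where "k = Max I"
    have "k \<in> I" using I by (simp add: k_def)
    have earlier: "I - {k} \<subseteq> {..<k}"
      using Max_ge[OF I(1)] unfolding k_def by (auto simp: order.strict_iff_order)
    have "sum p I = sum p (I - {k}) + p k" using I(1) \<open>k \<in> I\<close> by (simp add: sum.remove)
    then have funpow_sum: "(T ^^ sum p I) z = (T ^^ sum p (I - {k})) ((T ^^ p k) z)" for z
      by (simp add: funpow_add)
    obtain u where u: "u \<in> U" "u \<in> X" "(T ^^ p k) u \<in> Vs k"
      using p(3) by (auto simp: mem_hitting_times)
    have Gs_nested: "Gs (Suc j) \<subseteq> Gs j \<inter> {z. (T ^^ p j) z \<in> Gs j}"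
      and Vs_nested: "Vs (Suc j) \<subseteq> Vs j \<inter> {z. (T ^^ p j) z \<in> Vs j}" for j
      unfolding Gs_Suc Vs_Suc by blast+
    have "(T ^^ sum p I) x \<in> Gs 0"
      unfolding funpow_sum by (rule funpow_sum_mem_nested[where A = Gs, OF Gs_nested earlier p(2)])
    moreover have "(T ^^ sum p I) u \<in> Vs 0"
      unfolding funpow_sum by (rule funpow_sum_mem_nested[where A = Vs, OF Vs_nested earlier u(3)])
    ultimately show ?thesis using u by (auto simp: visit_times_def mem_hitting_times Gs_def Vs_def)
  qed
  then show ?thesis unfolding IP_set_def using p(1) by blast
qed

lemma IP_set_nonempty: "IP_set S \<Longrightarrow> S \<noteq> {}"
  unfolding IP_set_def by (metis empty_iff finite.emptyI finite_insert insert_not_empty)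

lemma IP_set_of_mem_recurrence_sets:
  assumes ds: "dyn_system X T" and wm: "weakly_mixing X T"
    and pi_base: "\<And>W. opene_in X W \<Longrightarrow> \<exists>B\<in>\<B>. B \<subseteq> W"
    and x: "\<And>G U V. G \<in> \<B> \<Longrightarrow> U \<in> \<B> \<Longrightarrow> V \<in> \<B> \<Longrightarrow> x \<in> recurrence_set X T G U V"
    and "opene_in X G" "opene_in X U" "opene_in X V"
  shows "IP_set (visit_times T x G \<inter> hitting_times X T U V)"
proof -
  have cont: "continuous_on X T" and maps: "T ` X \<subseteq> X" using ds by (auto simp: dyn_system_def)
  show ?thesis
  proof (rule IP_set_visit_hitting_times[OF cont maps _ \<open>opene_in X G\<close> \<open>opene_in X V\<close>])
    fix G' V' assume G': "opene_in X G'" and V': "opene_in X V'"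
    obtain U\<^sub>1 V\<^sub>1 where 1: "opene_in X U\<^sub>1" "opene_in X V\<^sub>1"
      "hitting_times X T U\<^sub>1 V\<^sub>1 \<subseteq> hitting_times X T G' G' \<inter> hitting_times X T V' V'"
      using weakly_mixing_hitting_times_Int[OF cont maps wm G' G' V' V'] by blast
    obtain U\<^sub>2 V\<^sub>2 where 2: "opene_in X U\<^sub>2" "opene_in X V\<^sub>2"
      "hitting_times X T U\<^sub>2 V\<^sub>2 \<subseteq> hitting_times X T U\<^sub>1 V\<^sub>1 \<inter> hitting_times X T U V'"
      using weakly_mixing_hitting_times_Int[OF cont maps wm 1(1,2) \<open>opene_in X U\<close> V'] by blast
    obtain B\<^sub>G B\<^sub>U B\<^sub>V where B: "B\<^sub>G \<in> \<B>" "B\<^sub>U \<in> \<B>" "B\<^sub>V \<in> \<B>"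
      and sub: "B\<^sub>G \<subseteq> G'" "B\<^sub>U \<subseteq> U\<^sub>2" "B\<^sub>V \<subseteq> V\<^sub>2"
      using pi_base[OF G'] pi_base[OF 2(1)] pi_base[OF 2(2)] by blast
    obtain p where "p \<ge> 1" "p \<in> visit_times T x B\<^sub>G" "p \<in> hitting_times X T B\<^sub>U B\<^sub>V"
      using x[OF B] by (auto simp: recurrence_set_def)
    moreover have "p \<in> hitting_times X T U\<^sub>2 V\<^sub>2"
      using hitting_times_mono[OF sub(2,3)] \<open>p \<in> hitting_times X T B\<^sub>U B\<^sub>V\<close> by blast
    ultimately show "\<exists>p\<ge>1. p \<in> visit_times T x G' \<inter> hitting_times X T G' G' \<inter>
        hitting_times X T V' V' \<inter> hitting_times X T U V'"
      using sub(1) 1(3) 2(3) unfolding visit_times_def by blast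
  qed
qed

lemma weakly_mixing_if_dense_visits_hitting_times:
  assumes "X' \<subseteq> X" "X \<subseteq> closure X'"
    and visits: "\<And>x G U V. x \<in> X' \<Longrightarrow> opene_in X G \<Longrightarrow> opene_in X U \<Longrightarrow> opene_in X V \<Longrightarrow>
      visit_times T x G \<inter> hitting_times X T U V \<noteq> {}"
  shows "weakly_mixing X T"
  unfolding weakly_mixing_def
proof (intro allI impI)
  fix A B assume A: "opene_in (X \<times> X) A" and B: "opene_in (X \<times> X) B"
  obtain U\<^sub>1 U\<^sub>2 where U: "opene_in X U\<^sub>1" "opene_in X U\<^sub>2" "U\<^sub>1 \<times> U\<^sub>2 \<subseteq> A"
    using opene_in_Times_contains[OF A] by blast
  obtain V\<^sub>1 V\<^sub>2 where V: "opene_in X V\<^sub>1" "opene_in X V\<^sub>2" "V\<^sub>1 \<times> V\<^sub>2 \<subseteq> B"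
    using opene_in_Times_contains[OF B] by blast
  obtain x where x: "x \<in> X'" "x \<in> U\<^sub>1"
    using closure_superset_iff_opene_in_meets[OF assms(1), THEN iffD1, rule_format, OF assms(2) U(1)]
    by blast
  obtain n where n: "(T ^^ n) x \<in> V\<^sub>1" "n \<in> hitting_times X T U\<^sub>2 V\<^sub>2"
    using visits[OF x(1) V(1) U(2) V(2)] by (auto simp: visit_times_def)
  then obtain u where "u \<in> U\<^sub>2" "u \<in> X" "(T ^^ n) u \<in> V\<^sub>2" by (auto simp: mem_hitting_times)
  then have "(x, u) \<in> A \<inter> (X \<times> X)" "((\<lambda>(x, y). (T x, T y)) ^^ n) (x, u) \<in> B"
    using x n U V assms(1) by (auto simp: funpow_map_prod)
  then show "hitting_times (X \<times> X) (\<lambda>(x, y). (T x, T y)) A B \<noteq> {}"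
    unfolding hitting_times_def by blast
qed

theorem proposition5p4:
  fixes X :: "'a::metric_space set" and T :: "'a \<Rightarrow> 'a"
  assumes "dyn_system X T"
  shows "weakly_mixing X T \<longleftrightarrow>
    (\<exists>X'. X' \<subseteq> X \<and> X \<subseteq> closure X' \<and> gdelta_in (top_of_set X) X' \<and>
      (\<forall>x\<in>X'. \<forall>G U V. opene_in X G \<longrightarrow> opene_in X U \<longrightarrow> opene_in X V \<longrightarrow>
         IP_set (visit_times T x G \<inter> hitting_times X T U V)))"
proof
  assume wm: "weakly_mixing X T"
  have "compact X" and cont: "continuous_on X T" and maps: "T ` X \<subseteq> X"
    using assms by (auto simp: dyn_system_def)
  obtain \<B> where \<B>: "countable \<B>" "\<And>B. B \<in> \<B> \<Longrightarrow> opene_in X B"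
    "\<And>W. opene_in X W \<Longrightarrow> \<exists>B\<in>\<B>. B \<subseteq> W"
    using compact_countable_pi_base[OF \<open>compact X\<close>] by blast
  define \<G> where "\<G> = (\<lambda>(G, U, V). recurrence_set X T G U V) ` (\<B> \<times> \<B> \<times> \<B>)"
  have "countable \<G>" using \<B>(1) by (simp add: \<G>_def)
  moreover have "openin (top_of_set X) S \<and> X \<subseteq> closure S" if "S \<in> \<G>" for S
  proof -
    obtain G U V where "G \<in> \<B>" "U \<in> \<B>" "V \<in> \<B>" and S: "S = recurrence_set X T G U V"
      using \<open>S \<in> \<G>\<close> by (auto simp: \<G>_def)
    then have "opene_in X G" "opene_in X U" "opene_in X V" using \<B>(2) by blast+
    then show ?thesis
      unfolding S using openin_recurrence_set[OF cont maps] dense_recurrence_set[OF assms wm]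
      by (simp add: opene_in_def)
  qed
  ultimately have "X \<subseteq> closure (X \<inter> \<Inter>\<G>)" "gdelta_in (top_of_set X) (X \<inter> \<Inter>\<G>)"
    using compact_dense_gdelta_Inter[OF \<open>compact X\<close>] by blast+
  moreover have "IP_set (visit_times T x G \<inter> hitting_times X T U V)"
    if x: "x \<in> X \<inter> \<Inter>\<G>" and "opene_in X G" "opene_in X U" "opene_in X V" for x G U V
  proof (rule IP_set_of_mem_recurrence_sets[OF assms wm \<B>(3) _ that(2-4)])
    fix G' U' V' assume "G' \<in> \<B>" "U' \<in> \<B>" "V' \<in> \<B>"
    then have "recurrence_set X T G' U' V' \<in> \<G>"
      unfolding \<G>_def by (intro image_eqI[where x="(G', U', V')"]) auto
    then show "x \<in> recurrence_set X T G' U' V'" using x by blast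
  qed
  ultimately show "\<exists>X'. X' \<subseteq> X \<and> X \<subseteq> closure X' \<and> gdelta_in (top_of_set X) X' \<and>
      (\<forall>x\<in>X'. \<forall>G U V. opene_in X G \<longrightarrow> opene_in X U \<longrightarrow> opene_in X V \<longrightarrow>
         IP_set (visit_times T x G \<inter> hitting_times X T U V))"
    by (intro exI[of _ "X \<inter> \<Inter>\<G>"] conjI ballI allI impI) blast+
next
  assume "\<exists>X'. X' \<subseteq> X \<and> X \<subseteq> closure X' \<and> gdelta_in (top_of_set X) X' \<and>
      (\<forall>x\<in>X'. \<forall>G U V. opene_in X G \<longrightarrow> opene_in X U \<longrightarrow> opene_in X V \<longrightarrow>
         IP_set (visit_times T x G \<inter> hitting_times X T U V))"
  then obtain X' where "X' \<subseteq> X" "X \<subseteq> closure X'"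
    and IP: "\<forall>x\<in>X'. \<forall>G U V. opene_in X G \<longrightarrow> opene_in X U \<longrightarrow> opene_in X V \<longrightarrow>
      IP_set (visit_times T x G \<inter> hitting_times X T U V)"
    by blast
  show "weakly_mixing X T"
    by (intro weakly_mixing_if_dense_visits_hitting_times[OF \<open>X' \<subseteq> X\<close> \<open>X \<subseteq> closure X'\<close>]
        IP_set_nonempty) (use IP in blast)
qed

end
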